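(* Let $F\subset X$ be the (finite, closed) set of classes of $K$-lattices with $\phi=0$, and let $G_1$ be the reduction of $G_K$ to $X\setminus F$ (elements whose source and range lie in $X\setminus F$). For every $\gamma\in G_1\setminus G_1^{(0)}$ there is an open neighborhood $V$ of $\gamma$ in $G_K$ such that $r(V)\cap s(V)=\emptyset$, where $r,s$ are the range and source maps of $G_K$.
   Context: $K$ is an imaginary quadratic field with a fixed embedding $K\subset\mathbb C$, $\mathcal O$ its ring of integers. A $K$-lattice $(\Lambda,\phi)$: finitely generated $\mathcal O$-submodule $\Lambda\subset\mathbb C$ with $\Lambda\otimes_{\mathcal O}K\cong K$ and $\mathcal O$-module map $\phi:K/\mathcal O\to K\Lambda/\Lambda$; commensurability: $K\Lambda_1=K\Lambda_2$, $\phi_1=\phi_2$ mod $\Lambda_1+\Lambda_2$. $\tilde{\mathcal R}_K$ is the locally compact étale groupoid of commensurable pairs (topology induced from the commensurability groupoid of 2-dimensional $\mathbb Q$-lattices, in which $(\Lambda,\phi)$ corresponds via $K$-lattices $\leftrightarrow\hat{\mathcal O}\times_{\hat{\mathcal O}^*}(\mathbb A_K^*/K^* )$ to the product topology), $G_K=\tilde{\mathcal R}_K/\mathbb C^*$ with the quotient topology, and $X=G_K^{(0)}$ the space of $K$-lattices up to scaling. *)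

theory Defs
  imports "HOL-Analysis.Analysis" "HOL-Computational_Algebra.Polynomial"
begin

(* K is given as a subset of the complex numbers (fixed embedding K \<subseteq> C). *)
definition imag_quadratic_field :: "complex set \<Rightarrow> bool" where
  "imag_quadratic_field K \<longleftrightarrow>
     (\<exists>\<theta>. \<theta> \<notin> \<real> \<and> K = {of_rat a + of_rat b * \<theta> | a b. True}) \<and>
     (\<forall>x\<in>K. \<forall>y\<in>K. x * y \<in> K) \<and> (\<forall>x\<in>K. inverse x \<in> K)"

definition OK :: "complex set \<Rightarrow> complex set" where
  "OK K = {x \<in> K. algebraic_int x}"

(* a K-lattice is represented by (Lambda, phi); phi : K \<rightarrow> C represents a map K/O \<rightarrow> K Lambda / Lambda *)
type_synonym klat = "complex set \<times> (complex \<Rightarrow> complex)"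

definition Kspan :: "complex set \<Rightarrow> complex set \<Rightarrow> complex set" where
  "Kspan K \<Lambda> = {k * x | k x. k \<in> K \<and> x \<in> \<Lambda>}"

definition is_klattice :: "complex set \<Rightarrow> klat \<Rightarrow> bool" where
  "is_klattice K L \<longleftrightarrow>
     (let \<Lambda> = fst L; \<phi> = snd L in
       \<comment> \<open>finitely generated O-submodule of C\<close>
       (\<exists>S. finite S \<and> \<Lambda> = {\<Sum>s\<in>S. a s * s | a. \<forall>s\<in>S. a s \<in> OK K}) \<and>
       \<comment> \<open>Lambda tensor_O K = K, i.e. Lambda has rank one\<close>
       \<Lambda> \<noteq> {0} \<and> (\<exists>w. \<Lambda> \<subseteq> {k * w | k. k \<in> K}) \<and>
       \<comment> \<open>phi is a well-defined O-module map K/O \<rightarrow> K Lambda / Lambda\<close>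
       (\<forall>x\<in>K. \<phi> x \<in> Kspan K \<Lambda>) \<and>
       (\<forall>x\<in>K. \<forall>y\<in>K. x - y \<in> OK K \<longrightarrow> \<phi> x - \<phi> y \<in> \<Lambda>) \<and>
       (\<forall>x\<in>K. \<forall>y\<in>K. \<phi> (x + y) - \<phi> x - \<phi> y \<in> \<Lambda>) \<and>
       (\<forall>a\<in>OK K. \<forall>x\<in>K. \<phi> (a * x) - a * \<phi> x \<in> \<Lambda>))"

(* equality of K-lattices (same lattice, same map mod Lambda) *)
definition klat_eq :: "complex set \<Rightarrow> klat \<Rightarrow> klat \<Rightarrow> bool" where
  "klat_eq K L L' \<longleftrightarrow> fst L = fst L' \<and> (\<forall>x\<in>K. snd L x - snd L' x \<in> fst L)"

definition commens :: "complex set \<Rightarrow> klat \<Rightarrow> klat \<Rightarrow> bool" where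
  "commens K L1 L2 \<longleftrightarrow> Kspan K (fst L1) = Kspan K (fst L2) \<and>
     (\<forall>x\<in>K. snd L1 x - snd L2 x \<in> {a + b | a b. a \<in> fst L1 \<and> b \<in> fst L2})"

definition scale :: "complex \<Rightarrow> klat \<Rightarrow> klat" where
  "scale c L = ((*) c ` fst L, \<lambda>x. c * snd L x)"

(* representatives of elements of the groupoid tilde R_K *)
definition Rt :: "complex set \<Rightarrow> (klat \<times> klat) set" where
  "Rt K = {(L1, L2). is_klattice K L1 \<and> is_klattice K L2 \<and> commens K L1 L2}"

(* basic neighbourhoods in tilde R_K (topology induced from the commensurability
   groupoid of 2-dimensional Q-lattices): deform both lattices by the same real-linear
   map alpha close to the identity and require agreement of both phi's on (1/N)O/O *)
definition nbhd :: "complex set \<Rightarrow> klat \<times> klat \<Rightarrow> real \<Rightarrow> nat \<Rightarrow> (klat \<times> klat) set" where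
  "nbhd K \<gamma> \<epsilon> N = {\<gamma>' \<in> Rt K. \<exists>\<alpha>. linear \<alpha> \<and> onorm (\<lambda>z. \<alpha> z - z) < \<epsilon> \<and>
      fst (fst \<gamma>') = \<alpha> ` fst (fst \<gamma>) \<and> fst (snd \<gamma>') = \<alpha> ` fst (snd \<gamma>) \<and>
      (\<forall>x\<in>K. of_nat N * x \<in> OK K \<longrightarrow>
          snd (fst \<gamma>') x - \<alpha> (snd (fst \<gamma>) x) \<in> fst (fst \<gamma>') \<and>
          snd (snd \<gamma>') x - \<alpha> (snd (snd \<gamma>) x) \<in> fst (snd \<gamma>'))}"

definition rt_open :: "complex set \<Rightarrow> (klat \<times> klat) set \<Rightarrow> bool" where
  "rt_open K W \<longleftrightarrow> W \<subseteq> Rt K \<and> (\<forall>\<gamma>\<in>W. \<exists>\<epsilon>>0. \<exists>N>0. nbhd K \<gamma> \<epsilon> N \<subseteq> W)"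

(* G_K = tilde R_K / C^*: identify equal K-lattice pairs and scalings *)
definition gk_rel :: "complex set \<Rightarrow> ((klat \<times> klat) \<times> (klat \<times> klat)) set" where
  "gk_rel K = {(\<gamma>, \<gamma>'). \<gamma> \<in> Rt K \<and> \<gamma>' \<in> Rt K \<and> (\<exists>c. c \<noteq> 0 \<and>
      klat_eq K (fst \<gamma>') (scale c (fst \<gamma>)) \<and> klat_eq K (snd \<gamma>') (scale c (snd \<gamma>)))}"

definition GK :: "complex set \<Rightarrow> (klat \<times> klat) set set" where
  "GK K = Rt K // gk_rel K"

definition gk_open :: "complex set \<Rightarrow> (klat \<times> klat) set set \<Rightarrow> bool" where
  "gk_open K V \<longleftrightarrow> V \<subseteq> GK K \<and> rt_open K (\<Union>V)"

(* points of X: K-lattices up to scaling *)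
definition xclass :: "complex set \<Rightarrow> klat \<Rightarrow> klat set" where
  "xclass K L = {L'. is_klattice K L' \<and> (\<exists>c. c \<noteq> 0 \<and> klat_eq K L' (scale c L))}"

definition Xset :: "complex set \<Rightarrow> klat set set" where
  "Xset K = {xclass K L | L. is_klattice K L}"

(* F: classes with phi = 0 *)
definition Fset :: "complex set \<Rightarrow> klat set set" where
  "Fset K = {xclass K L | L. is_klattice K L \<and> (\<forall>x\<in>K. snd L x \<in> fst L)}"

definition rg :: "(klat \<times> klat) set \<Rightarrow> klat set" where
  "rg \<Gamma> = fst ` \<Gamma>"

definition sr :: "(klat \<times> klat) set \<Rightarrow> klat set" where
  "sr \<Gamma> = snd ` \<Gamma>"

definition units_GK :: "complex set \<Rightarrow> (klat \<times> klat) set set" where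
  "units_GK K = {\<Gamma> \<in> GK K. \<exists>L. (L, L) \<in> \<Gamma>}"

definition G1 :: "complex set \<Rightarrow> (klat \<times> klat) set set" where
  "G1 K = {\<Gamma> \<in> GK K. rg \<Gamma> \<in> Xset K - Fset K \<and> sr \<Gamma> \<in> Xset K - Fset K}"

end

theory Submission
  imports Defs
begin

text \<open>
  Represent \<open>\<Gamma>\<close> by a pair \<open>(L\<^sub>1, L\<^sub>2)\<close> of commensurable \<open>K\<close>-lattices. As \<open>\<Gamma>\<close> is not a unit,
  \<open>L\<^sub>1 \<noteq> L\<^sub>2\<close>, and as its source lies outside \<open>F\<close>, \<open>\<phi>\<^sub>2 x \<notin> \<Lambda>\<^sub>2\<close> for some \<open>x\<close>. For a level \<open>N\<close>,
  take all pairs that, up to a common scaling \<open>c\<close>, coincide with \<open>(c L\<^sub>1, c L\<^sub>2)\<close> as lattices and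
  on the \<open>N\<close>-torsion \<open>N\<^sup>-\<^sup>1\<O>/\<O>\<close>. This set is invariant under scaling, and it is open because a
  real-linear map close to the identity that carries an \<open>\<O>\<close>-lattice to an \<open>\<O>\<close>-lattice commutes
  with a nonreal integer of \<open>K\<close> (by discreteness) and hence is a complex multiplication.
  If range and source of its image \<open>V\<close> in \<open>G\<^sub>K\<close> met, then \<open>\<Lambda>\<^sub>1 = h \<Lambda>\<^sub>2\<close> and \<open>\<phi>\<^sub>1 \<equiv> h \<phi>\<^sub>2\<close> on the
  \<open>N\<close>-torsion for some \<open>h\<close>. The factors \<open>h\<close> with \<open>\<Lambda>\<^sub>1 = h \<Lambda>\<^sub>2\<close> have bounded norm and bounded
  denominator, so the \<open>1/(h - 1)\<close>, \<open>h \<noteq> 1\<close>, have a common denominator \<open>m\<close>. Choosing \<open>N\<close> so that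
  \<open>x/m\<close> is \<open>N\<close>-torsion, commensurability forces \<open>\<phi>\<^sub>2 x \<in> \<Lambda>\<^sub>2\<close> when \<open>h \<noteq> 1\<close>, and \<open>L\<^sub>1 = L\<^sub>2\<close> when
  \<open>h = 1\<close>.
\<close>

section \<open>Integrality of trace and norm\<close>

definition integral_trace_norm :: "complex \<Rightarrow> bool" where
  "integral_trace_norm x \<longleftrightarrow> x + cnj x \<in> \<int> \<and> x * cnj x \<in> \<int>"

lemma algebraic_int_quadratic_root:
  fixes x A B :: complex
  assumes "A \<in> \<int>" "B \<in> \<int>" "x * x - A * x + B = 0"
  shows "algebraic_int x"
proof (rule algebraic_int.intros[of "[:B, -A, 1:]"])
  show "\<forall>i. coeff [:B, - A, 1:] i \<in> \<int>"
    using assms by (auto simp: coeff_pCons split: nat.splits)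
  show "poly [:B, - A, 1:] x = 0"
    using assms(3) by (simp add: algebra_simps)
qed simp

lemma integral_trace_norm_imp_algebraic_int: "integral_trace_norm x \<Longrightarrow> algebraic_int x"
  unfolding integral_trace_norm_def
  by (rule algebraic_int_quadratic_root[of "x + cnj x" "x * cnj x"]) (auto simp: algebra_simps)

lemma int_poly_degree_le_1_nonreal_root:
  fixes R :: "int poly" and x :: complex
  assumes "degree R \<le> 1" "poly (map_poly of_int R) x = 0" "x \<notin> \<real>"
  shows "R = 0"
proof -
  have R: "R = [:coeff R 0, coeff R 1:]"
    by (rule poly_eqI) (use assms(1) in \<open>auto simp: coeff_pCons coeff_eq_0 split: nat.splits\<close>)
  have root: "of_int (coeff R 0) + x * of_int (coeff R 1) = 0"
    using assms(2) by (subst (asm) R) (simp add: map_poly_pCons)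
  have "coeff R 1 = 0"
  proof (rule ccontr)
    assume "coeff R 1 \<noteq> 0"
    then have "x = - of_int (coeff R 0) / of_int (coeff R 1)"
      using root by (simp add: field_simps add_eq_0_iff)
    then show False using assms(3) by simp
  qed
  with root have "coeff R 0 = 0" by simp
  with \<open>coeff R 1 = 0\<close> show ?thesis by (subst R) simp
qed

lemma content_eq_abs_lead_coeff_if_dvd_monic:
  fixes P M Q :: "int poly"
  assumes P: "lead_coeff P = 1" and a: "a \<noteq> 0" and PMQ: "smult a P = M * Q"
  shows "content M = \<bar>lead_coeff M\<bar>"
proof -
  have "P \<noteq> 0" using P by auto
  then have "M \<noteq> 0" "Q \<noteq> 0" using PMQ a by auto
  have "content P dvd 1"
    using content_dvd_coeff[of P "degree P"] P by simp
  then have "content P = 1" using is_unit_content_iff by blast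
  moreover have "a = lead_coeff M * lead_coeff Q"
    using arg_cong[OF PMQ, of lead_coeff] P a by (simp add: lead_coeff_mult)
  ultimately have prod: "content M * content Q = \<bar>lead_coeff M\<bar> * \<bar>lead_coeff Q\<bar>"
    using arg_cong[OF PMQ, of content] by (simp add: content_mult abs_mult)
  have le: "content p \<le> \<bar>lead_coeff p\<bar>" if "p \<noteq> 0" for p :: "int poly"
    using dvd_imp_le_int[OF _ content_dvd_coeff[of p "degree p"]] that abs_ge_self[of "content p"] by simp
  have "content Q > 0"
    using \<open>Q \<noteq> 0\<close> normalize_content[of Q] by (metis abs_ge_zero content_eq_zero_iff less_le normalize_int_def)
  show ?thesis
  proof (rule antisym[OF le[OF \<open>M \<noteq> 0\<close>]], rule ccontr)
    assume "\<not> \<bar>lead_coeff M\<bar> \<le> content M"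
    then have "content M * content Q < \<bar>lead_coeff M\<bar> * content Q"
      using \<open>content Q > 0\<close> by simp
    also have "\<dots> \<le> \<bar>lead_coeff M\<bar> * \<bar>lead_coeff Q\<bar>"
      using le[OF \<open>Q \<noteq> 0\<close>] by (simp add: mult_left_mono)
    finally show False using prod by simp
  qed
qed

lemma map_poly_of_int_add:
  "map_poly (of_int :: int \<Rightarrow> 'a :: comm_ring_1) (p + q) = map_poly of_int p + map_poly of_int q"
  by (rule poly_eqI) (simp add: coeff_map_poly)

lemma map_poly_of_int_mult:
  "map_poly (of_int :: int \<Rightarrow> 'a :: comm_ring_1) (p * q) = map_poly of_int p * map_poly of_int q"
  by (rule poly_eqI) (simp add: coeff_map_poly coeff_mult of_int_sum)

lemma algebraic_int_nonreal_quadratic_dvd: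
  fixes x :: complex and A a1 a0 :: int
  assumes alg: "algebraic_int x" and "x \<notin> \<real>" and "A \<noteq> 0"
    and root: "of_int A * x * x - of_int a1 * x + of_int a0 = 0"
  shows "A dvd a1" "A dvd a0"
proof -
  obtain P where P: "poly (map_poly of_int P) x = 0" "lead_coeff P = 1"
    using alg algebraic_int_altdef_ipoly by blast
  define M :: "int poly" where "M = [:a0, -a1, A:]"
  have "M \<noteq> 0" "degree M = 2" "lead_coeff M = A"
    using \<open>A \<noteq> 0\<close> by (simp_all add: M_def numeral_2_eq_2)
  have M_root: "poly (map_poly of_int M) x = 0"
    using root by (simp add: M_def map_poly_pCons algebra_simps)
  obtain a Q where "a \<noteq> 0" and division: "smult a P = M * Q + pseudo_mod P M"
    using pseudo_mod(1)[OF \<open>M \<noteq> 0\<close>] by blast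
  have "pseudo_mod P M = 0"
  proof (rule int_poly_degree_le_1_nonreal_root)
    show "degree (pseudo_mod P M) \<le> 1"
      using pseudo_mod(2)[OF \<open>M \<noteq> 0\<close>, of P] \<open>degree M = 2\<close> by auto
    show "poly (map_poly of_int (pseudo_mod P M)) x = 0"
      using arg_cong[OF division, of "\<lambda>p. poly (map_poly of_int p) x"] P(1) M_root
      by (simp add: map_poly_of_int_add map_poly_of_int_mult map_poly_smult)
  qed fact
  then have "smult a P = M * Q" using division by simp
  from content_eq_abs_lead_coeff_if_dvd_monic[OF P(2) \<open>a \<noteq> 0\<close> this]
  have "content M = \<bar>A\<bar>" using \<open>lead_coeff M = A\<close> by simp
  then show "A dvd a1" "A dvd a0"
    using content_dvd_coeff[of M 1] content_dvd_coeff[of M 0] by (simp_all add: M_def)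
qed

lemma Rats_common_denominator:
  assumes "(p::complex) \<in> \<rat>" "q \<in> \<rat>"
  obtains A :: int where "A > 0" "of_int A * p \<in> \<int>" "of_int A * q \<in> \<int>"
proof -
  obtain a b c d :: int where "b > 0" "p = of_int a / of_int b" "d > 0" "q = of_int c / of_int d"
    using assms by (metis Rats_cases')
  then have "of_int (b * d) * p = of_int (a * d)" "of_int (b * d) * q = of_int (b * c)"
    by simp_all
  with \<open>b > 0\<close> \<open>d > 0\<close> show ?thesis by (intro that[of "b * d"]) (simp_all del: of_int_mult)
qed

lemma algebraic_int_rational_trace_norm:
  fixes x :: complex
  assumes alg: "algebraic_int x" and "x + cnj x \<in> \<rat>" "x * cnj x \<in> \<rat>"
  shows "integral_trace_norm x"
proof (cases "x \<in> \<real>")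
  case True
  then have "x = (x + cnj x) / 2" by (simp add: Reals_cnj_iff)
  then have "x \<in> \<rat>" using \<open>x + cnj x \<in> \<rat>\<close> by (metis Rats_divide Rats_number_of)
  then have "x \<in> \<int>" using rational_algebraic_int_is_int alg by blast
  then show ?thesis using True by (simp add: integral_trace_norm_def Reals_cnj_iff)
next
  case False
  obtain A where "A > 0" and "of_int A * (x + cnj x) \<in> \<int>" "of_int A * (x * cnj x) \<in> \<int>"
    using Rats_common_denominator assms(2,3) by blast
  then obtain a1 a0 where a1: "of_int A * (x + cnj x) = of_int a1"
    and a0: "of_int A * (x * cnj x) = of_int a0" by (metis Ints_cases)
  have "of_int A * x * x - of_int a1 * x + of_int a0 = 0"
    unfolding a1[symmetric] a0[symmetric] by (simp add: algebra_simps)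
  then have "A dvd a1" "A dvd a0"
    using algebraic_int_nonreal_quadratic_dvd[OF alg False] \<open>A > 0\<close> by auto
  then obtain k1 k0 where "a1 = A * k1" "a0 = A * k0" by (auto elim!: dvdE)
  then have "of_int A * (x + cnj x) = of_int A * of_int k1"
    "of_int A * (x * cnj x) = of_int A * of_int k0"
    using a1 a0 by simp_all
  then have "x + cnj x = of_int k1" "x * cnj x = of_int k0"
    using \<open>A > 0\<close> by simp_all
  then show ?thesis unfolding integral_trace_norm_def by simp
qed

section \<open>Real-linear maps close to the identity\<close>

lemma linear_complex_repr:
  fixes \<alpha> :: "complex \<Rightarrow> complex"
  assumes "linear \<alpha>"
  shows "\<alpha> z = ((\<alpha> 1 - \<i> * \<alpha> \<i>) / 2) * z + ((\<alpha> 1 + \<i> * \<alpha> \<i>) / 2) * cnj z"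
proof -
  have z: "z = Re z *\<^sub>R 1 + Im z *\<^sub>R \<i>" by (simp add: complex_eq_iff)
  have "\<alpha> z = Re z *\<^sub>R \<alpha> 1 + Im z *\<^sub>R \<alpha> \<i>"
    by (subst z) (simp add: linear_add[OF assms] linear_cmul[OF assms])
  also have "\<dots> = of_real (Re z) * \<alpha> 1 + of_real (Im z) * \<alpha> \<i>"
    by (simp add: scaleR_conv_of_real)
  also have "\<dots> = ((\<alpha> 1 - \<i> * \<alpha> \<i>) / 2) * z + ((\<alpha> 1 + \<i> * \<alpha> \<i>) / 2) * cnj z"
    by (simp add: complex_eq_iff field_simps)
  finally show ?thesis .
qed

lemma linear_mult_if_commutes_nonreal:
  fixes \<alpha> :: "complex \<Rightarrow> complex"
  assumes "linear \<alpha>" "\<theta> \<notin> \<real>" "l \<noteq> 0" "\<alpha> (\<theta> * l) = \<theta> * \<alpha> l"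
  shows "\<alpha> z = \<alpha> 1 * z"
proof -
  define p where "p = (\<alpha> 1 - \<i> * \<alpha> \<i>) / 2"
  define q where "q = (\<alpha> 1 + \<i> * \<alpha> \<i>) / 2"
  have \<alpha>: "\<alpha> w = p * w + q * cnj w" for w
    unfolding p_def q_def by (rule linear_complex_repr[OF assms(1)])
  have "p * (\<theta> * l) + q * cnj (\<theta> * l) = \<theta> * (p * l + q * cnj l)"
    using assms(4) unfolding \<alpha> .
  then have "q * cnj l * (cnj \<theta> - \<theta>) = 0" by (simp add: algebra_simps)
  moreover have "cnj \<theta> \<noteq> \<theta>" using assms(2) Reals_cnj_iff by metis
  ultimately have "q = 0" using assms(3) by simp
  then show ?thesis using \<alpha>[of z] \<alpha>[of 1] by simp
qed

lemma onorm_bound: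
  fixes \<alpha> :: "complex \<Rightarrow> complex"
  assumes "linear \<alpha>" "onorm (\<lambda>z. \<alpha> z - z) < \<epsilon>"
  shows "norm (\<alpha> z - z) \<le> \<epsilon> * norm z"
proof -
  have "bounded_linear (\<lambda>z. \<alpha> z - z)"
    using assms(1) by (simp add: linear_conv_bounded_linear bounded_linear_sub bounded_linear_ident)
  then have "norm (\<alpha> z - z) \<le> onorm (\<lambda>z. \<alpha> z - z) * norm z" by (rule onorm)
  also have "\<dots> \<le> \<epsilon> * norm z" using assms(2) by (intro mult_right_mono) auto
  finally show ?thesis .
qed

lemma near_identity_commutes:
  fixes \<alpha> :: "complex \<Rightarrow> complex"
  assumes "linear \<alpha>" "onorm (\<lambda>z. \<alpha> z - z) < \<epsilon>" "\<epsilon> \<le> 1/2"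
    and discrete: "\<forall>l\<in>\<Lambda>. l \<noteq> 0 \<longrightarrow> \<delta> \<le> norm l" and diff: "\<forall>x\<in>\<Lambda>. \<forall>y\<in>\<Lambda>. x - y \<in> \<Lambda>"
    and "\<theta> * l \<in> \<Lambda>" "\<theta> * \<alpha> l \<in> \<alpha> ` \<Lambda>" and small: "4 * \<epsilon> * norm \<theta> * norm l < \<delta>"
  shows "\<alpha> (\<theta> * l) = \<theta> * \<alpha> l"
proof -
  note bound = onorm_bound[OF assms(1,2)]
  obtain \<mu> where "\<mu> \<in> \<Lambda>" and \<mu>: "\<alpha> \<mu> = \<theta> * \<alpha> l" using assms(7) by auto
  \<comment> \<open>\<open>\<mu> - \<theta> * l\<close> is a lattice vector that \<open>\<alpha>\<close> moves only slightly, hence it is short, hence zero\<close>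
  define d where "d = \<mu> - \<theta> * l"
  have "d \<in> \<Lambda>" unfolding d_def using diff \<open>\<mu> \<in> \<Lambda>\<close> \<open>\<theta> * l \<in> \<Lambda>\<close> by blast
  have "\<alpha> d = \<theta> * (\<alpha> l - l) + (\<theta> * l - \<alpha> (\<theta> * l))"
    unfolding d_def linear_diff[OF assms(1)] \<mu> by (simp add: algebra_simps)
  then have "norm (\<alpha> d) \<le> norm (\<theta> * (\<alpha> l - l)) + norm (\<theta> * l - \<alpha> (\<theta> * l))"
    by (simp only: norm_triangle_ineq)
  also have "norm (\<theta> * (\<alpha> l - l)) \<le> norm \<theta> * (\<epsilon> * norm l)"
    unfolding norm_mult by (intro mult_left_mono bound) auto
  also have "norm (\<theta> * l - \<alpha> (\<theta> * l)) \<le> \<epsilon> * (norm \<theta> * norm l)"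
    using bound[of "\<theta> * l"] by (simp add: norm_minus_commute norm_mult)
  finally have "norm (\<alpha> d) \<le> 2 * \<epsilon> * norm \<theta> * norm l" by (simp add: algebra_simps)
  moreover have "norm d \<le> norm (\<alpha> d) + \<epsilon> * norm d"
    using norm_triangle_ineq4[of "\<alpha> d" "\<alpha> d - d"] bound[of d] by simp
  moreover have "\<epsilon> * norm d \<le> norm d / 2"
    using mult_right_mono[OF \<open>\<epsilon> \<le> 1/2\<close> norm_ge_zero[of d]] by simp
  ultimately have "norm d \<le> 4 * \<epsilon> * norm \<theta> * norm l" by linarith
  then have "d = 0" using discrete \<open>d \<in> \<Lambda>\<close> small by force
  then show ?thesis using \<mu> unfolding d_def by simp
qed

section \<open>The ring of integers of \<open>K\<close>\<close>

lemma of_rat_in_Reals: "(of_rat r :: complex) \<in> \<real>"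
proof -
  obtain a b where "r = Fract a b" "b \<noteq> 0" by (cases r) auto
  then show ?thesis by (simp add: of_rat_rat)
qed

lemma cnj_of_rat [simp]: "cnj (of_rat r) = of_rat r"
  using of_rat_in_Reals Reals_cnj_iff by blast

lemma scale_1 [simp]: "scale 1 L = L"
  by (simp add: scale_def)

locale imag_quadratic =
  fixes K :: "complex set"
  assumes imag_quadratic: "imag_quadratic_field K"
begin

lemma K_basis:
  obtains \<theta> where "\<theta> \<notin> \<real>" "K = {of_rat a + of_rat b * \<theta> | a b. True}"
  using imag_quadratic unfolding imag_quadratic_field_def by blast

lemma K_mult: "x \<in> K \<Longrightarrow> y \<in> K \<Longrightarrow> x * y \<in> K"
  using imag_quadratic unfolding imag_quadratic_field_def by blast

lemma K_inverse: "x \<in> K \<Longrightarrow> inverse x \<in> K"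
  using imag_quadratic unfolding imag_quadratic_field_def by blast

lemma K_divide: "x \<in> K \<Longrightarrow> y \<in> K \<Longrightarrow> x / y \<in> K"
  by (simp add: divide_inverse K_mult K_inverse)

lemma K_of_rat: "of_rat r \<in> K"
proof -
  obtain \<theta> where "K = {of_rat a + of_rat b * \<theta> | a b. True}" by (rule K_basis)
  then have "of_rat r + of_rat 0 * \<theta> \<in> K" by blast
  then show ?thesis by simp
qed

lemma K_of_nat: "of_nat n \<in> K"
  using K_of_rat[of "of_nat n"] by simp

lemma K_1: "1 \<in> K"
  using K_of_nat[of 1] by simp

lemma K_add: "x \<in> K \<Longrightarrow> y \<in> K \<Longrightarrow> x + y \<in> K"
proof -
  assume "x \<in> K" "y \<in> K"
  obtain \<theta> where K: "K = {of_rat a + of_rat b * \<theta> | a b. True}" by (rule K_basis)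
  then obtain a b c d where "x = of_rat a + of_rat b * \<theta>" "y = of_rat c + of_rat d * \<theta>"
    using \<open>x \<in> K\<close> \<open>y \<in> K\<close> by blast
  then have "x + y = of_rat (a + c) + of_rat (b + d) * \<theta>" by (simp add: of_rat_add algebra_simps)
  then show "x + y \<in> K" using K by blast
qed

lemma K_nonreal: "\<exists>\<theta>\<in>K. \<theta> \<notin> \<real>"
proof -
  obtain \<theta> where "\<theta> \<notin> \<real>" and K: "K = {of_rat a + of_rat b * \<theta> | a b. True}"
    by (rule K_basis)
  moreover have "of_rat 0 + of_rat 1 * \<theta> \<in> K" using K by blast
  ultimately show ?thesis by auto
qed

lemma K_real_imp_Rats: "x \<in> K \<Longrightarrow> x \<in> \<real> \<Longrightarrow> x \<in> \<rat>"
proof -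
  assume "x \<in> K" "x \<in> \<real>"
  obtain \<theta> where "\<theta> \<notin> \<real>" and K: "K = {of_rat a + of_rat b * \<theta> | a b. True}" by (rule K_basis)
  then obtain a b where x: "x = of_rat a + of_rat b * \<theta>" using \<open>x \<in> K\<close> by blast
  have "b = 0"
  proof (rule ccontr)
    assume "b \<noteq> 0"
    then have "\<theta> = (x - of_rat a) / of_rat b" using x by (simp add: field_simps)
    then have "\<theta> \<in> \<real>" using \<open>x \<in> \<real>\<close> of_rat_in_Reals by simp
    then show False using \<open>\<theta> \<notin> \<real>\<close> by contradiction
  qed
  then show "x \<in> \<rat>" using x by simp
qed

lemma K_cnj: "x \<in> K \<Longrightarrow> cnj x \<in> K"
proof -
  assume "x \<in> K"
  obtain \<theta> where "\<theta> \<notin> \<real>" and K: "K = {of_rat a + of_rat b * \<theta> | a b. True}" by (rule K_basis)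
  have "of_rat 0 + of_rat 1 * \<theta> \<in> K" using K by blast
  then have "\<theta> \<in> K" by simp
  then obtain p q where pq: "\<theta> * \<theta> = of_rat p + of_rat q * \<theta>"
    using K_mult[of \<theta> \<theta>] K by blast
  then have "cnj \<theta> * cnj \<theta> = of_rat p + of_rat q * cnj \<theta>"
    by (metis complex_cnj_add complex_cnj_mult cnj_of_rat)
  with pq have "(\<theta> - cnj \<theta>) * (\<theta> + cnj \<theta> - of_rat q) = 0"
    by (simp add: algebra_simps)
  moreover have "\<theta> \<noteq> cnj \<theta>" using \<open>\<theta> \<notin> \<real>\<close> Reals_cnj_iff by metis
  ultimately have "\<theta> + cnj \<theta> - of_rat q = 0" by simp
  then have "cnj \<theta> = of_rat q - \<theta>" by (simp add: algebra_simps)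
  moreover obtain a b where "x = of_rat a + of_rat b * \<theta>" using \<open>x \<in> K\<close> K by blast
  ultimately have "cnj x = of_rat a + of_rat b * (of_rat q - \<theta>)" by simp
  also have "\<dots> = of_rat (a + b * q) + of_rat (- b) * \<theta>"
    by (simp add: of_rat_add of_rat_mult of_rat_minus algebra_simps)
  finally have "cnj x = of_rat (a + b * q) + of_rat (- b) * \<theta>" .
  then show "cnj x \<in> K" using K by blast
qed

lemma K_trace_norm_Rats: "x \<in> K \<Longrightarrow> x + cnj x \<in> \<rat> \<and> x * cnj x \<in> \<rat>"
  by (intro conjI K_real_imp_Rats K_add K_mult K_cnj) (auto simp: Reals_cnj_iff)

lemma OK_iff: "x \<in> OK K \<longleftrightarrow> x \<in> K \<and> integral_trace_norm x"
  unfolding OK_def using algebraic_int_rational_trace_norm K_trace_norm_Rats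
    integral_trace_norm_imp_algebraic_int by blast

lemma integral_trace_norm_add_mult:
  assumes "x \<in> K" "y \<in> K" "integral_trace_norm x" "integral_trace_norm y"
  shows "integral_trace_norm (x + y)" "integral_trace_norm (x * y)"
proof -
  have tx: "x + cnj x \<in> \<int>" and nx: "x * cnj x \<in> \<int>"
    and ty: "y + cnj y \<in> \<int>" and ny: "y * cnj y \<in> \<int>"
    using assms(3,4) unfolding integral_trace_norm_def by auto
  define s where "s = x * cnj y + cnj x * y"
  define s' where "s' = x * y + cnj x * cnj y"
  \<comment> \<open>\<open>s\<close> and \<open>s'\<close> are the roots of a monic integer quadratic, and \<open>s\<close> is rational\<close>
  have "s \<in> \<rat>"
    using assms(1,2) unfolding s_def
    by (intro K_real_imp_Rats K_add K_mult K_cnj) (auto simp: Reals_cnj_iff)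
  have sum: "s + s' \<in> \<int>"
  proof -
    have "s + s' = (x + cnj x) * (y + cnj y)" unfolding s_def s'_def by (simp add: algebra_simps)
    then show ?thesis using tx ty by simp
  qed
  have prod: "s * s' \<in> \<int>"
  proof -
    have "s * s' = (y * cnj y) * ((x + cnj x) * (x + cnj x) - 2 * (x * cnj x))
                  + (x * cnj x) * ((y + cnj y) * (y + cnj y) - 2 * (y * cnj y))"
      unfolding s_def s'_def by (simp add: algebra_simps)
    then show ?thesis using tx nx ty ny by simp
  qed
  have "s * s - (s + s') * s + s * s' = 0" by (simp add: algebra_simps)
  then have "s \<in> \<int>"
    using rational_algebraic_int_is_int algebraic_int_quadratic_root[OF sum prod] \<open>s \<in> \<rat>\<close> by blast
  then have "s' \<in> \<int>" using sum by (metis Ints_diff add_diff_cancel_left')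
  have "(x + y) + cnj (x + y) = (x + cnj x) + (y + cnj y)"
    "(x + y) * cnj (x + y) = x * cnj x + y * cnj y + s"
    unfolding s_def by (simp_all add: algebra_simps)
  then show "integral_trace_norm (x + y)"
    unfolding integral_trace_norm_def using tx nx ty ny \<open>s \<in> \<int>\<close> by (metis Ints_add)
  have "(x * y) + cnj (x * y) = s'" "(x * y) * cnj (x * y) = (x * cnj x) * (y * cnj y)"
    unfolding s'_def by (simp_all add: algebra_simps)
  then show "integral_trace_norm (x * y)"
    unfolding integral_trace_norm_def using nx ny \<open>s' \<in> \<int>\<close> by (metis Ints_mult)
qed

lemma OK_add: "x \<in> OK K \<Longrightarrow> y \<in> OK K \<Longrightarrow> x + y \<in> OK K"
  using integral_trace_norm_add_mult(1) K_add unfolding OK_iff by blast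

lemma OK_mult: "x \<in> OK K \<Longrightarrow> y \<in> OK K \<Longrightarrow> x * y \<in> OK K"
  using integral_trace_norm_add_mult(2) K_mult unfolding OK_iff by blast

lemma OK_of_int: "of_int k \<in> OK K"
  unfolding OK_def using K_of_rat[of "of_int k"] by simp

lemma OK_of_nat: "of_nat k \<in> OK K"
  using OK_of_int[of "int k"] by simp

lemma OK_0: "0 \<in> OK K" and OK_1: "1 \<in> OK K"
  using OK_of_nat[of 0] OK_of_nat[of 1] by simp_all

lemma OK_diff: "x \<in> OK K \<Longrightarrow> y \<in> OK K \<Longrightarrow> x - y \<in> OK K"
  using OK_add[of x "- y"] OK_mult[OF OK_of_int[of "- 1"], of y] by simp

lemma OK_cnj: "x \<in> OK K \<Longrightarrow> cnj x \<in> OK K"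
  unfolding OK_def using K_cnj by auto

lemma OK_sum: "finite S \<Longrightarrow> (\<And>s. s \<in> S \<Longrightarrow> f s \<in> OK K) \<Longrightarrow> sum f S \<in> OK K"
  by (induct S rule: finite_induct) (auto intro: OK_add OK_0)

lemma OK_norm_square:
  assumes "x \<in> OK K"
  obtains k :: nat where "x * cnj x = of_nat k" "(norm x)\<^sup>2 = real k"
proof -
  have "x * cnj x \<in> \<int>" using assms unfolding OK_iff integral_trace_norm_def by blast
  moreover have "x * cnj x = of_real ((norm x)\<^sup>2)" by (metis complex_norm_square)
  ultimately obtain k where k: "(norm x)\<^sup>2 = real_of_int k" by (metis Ints_cases of_real_eq_iff of_real_of_int_eq)
  then have "k \<ge> 0" by (metis zero_le_power2 of_int_0_le_iff)
  with k \<open>x * cnj x = of_real ((norm x)\<^sup>2)\<close> show ?thesis by (intro that[of "nat k"]) simp_all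
qed

lemma OK_norm_ge_1: "x \<in> OK K \<Longrightarrow> x \<noteq> 0 \<Longrightarrow> 1 \<le> norm x"
proof -
  assume "x \<in> OK K" "x \<noteq> 0"
  obtain k where "x * cnj x = of_nat k" "(norm x)\<^sup>2 = real k"
    by (rule OK_norm_square[OF \<open>x \<in> OK K\<close>])
  then have "k \<noteq> 0" using \<open>x \<noteq> 0\<close> by (cases k) simp_all
  then have "1 \<le> (norm x)\<^sup>2" using \<open>(norm x)\<^sup>2 = real k\<close> by simp
  then show "1 \<le> norm x" by (metis norm_ge_zero one_power2 power2_le_imp_le)
qed

lemma OK_multiple:
  assumes "x \<in> K"
  obtains n :: nat where "n > 0" "of_nat n * x \<in> OK K"
proof -
  obtain A where "A > 0" "of_int A * (x + cnj x) \<in> \<int>" "of_int A * (x * cnj x) \<in> \<int>"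
    using Rats_common_denominator K_trace_norm_Rats[OF assms] by blast
  moreover have "of_int A * x + cnj (of_int A * x) = of_int A * (x + cnj x)"
    "of_int A * x * cnj (of_int A * x) = of_int A * (of_int A * (x * cnj x))"
    by (simp_all add: algebra_simps)
  ultimately have "integral_trace_norm (of_int A * x)"
    unfolding integral_trace_norm_def by (metis Ints_mult Ints_of_int)
  moreover have "of_int A * x \<in> K" using K_mult[OF _ assms] K_of_rat[of "of_int A"] by simp
  ultimately have "of_int A * x \<in> OK K" unfolding OK_iff by blast
  moreover have "of_nat (nat A) * x = of_int A * x" using \<open>A > 0\<close> by simp
  ultimately show ?thesis using \<open>A > 0\<close> by (intro that[of "nat A"]) simp_all
qed

lemma OK_nonreal: "\<exists>\<theta>\<in>OK K. \<theta> \<notin> \<real>"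
proof -
  obtain \<theta> where "\<theta> \<in> K" "\<theta> \<notin> \<real>" using K_nonreal by blast
  moreover obtain n :: nat where "n > 0" "of_nat n * \<theta> \<in> OK K" using OK_multiple[OF \<open>\<theta> \<in> K\<close>] .
  moreover have "of_nat n * \<theta> \<notin> \<real>"
    using \<open>\<theta> \<notin> \<real>\<close> \<open>n > 0\<close> Reals_divide[of "of_nat n * \<theta>" "of_nat n"] by auto
  ultimately show ?thesis by blast
qed

lemma fact_divide_OK:
  assumes "g \<in> OK K" "g \<noteq> 0" "(norm g)\<^sup>2 \<le> real B"
  shows "of_nat (fact B) / g \<in> OK K"
proof -
  obtain k where k: "g * cnj g = of_nat k" "(norm g)\<^sup>2 = real k" using OK_norm_square[OF assms(1)] .
  then have "k \<noteq> 0" "k \<le> B" using assms(2,3) by (cases k; simp)+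
  with dvd_fact[of k B] obtain j where "fact B = k * j" by (auto elim!: dvdE)
  then have "of_nat (fact B) / g = of_nat j * cnj g"
    using k(1) \<open>k \<noteq> 0\<close> assms(2) by (simp add: field_simps)
  then show ?thesis using OK_mult[OF OK_of_nat OK_cnj[OF assms(1)]] by simp
qed

lemma OK_common_multiple:
  "finite S \<Longrightarrow> S \<subseteq> K \<Longrightarrow> \<exists>n::nat. n > 0 \<and> (\<forall>s\<in>S. of_nat n * s \<in> OK K)"
proof (induction S rule: finite_induct)
  case empty
  show ?case by (intro exI[of _ 1]) simp
next
  case (insert x S)
  then obtain n where "n > 0" and n: "\<forall>s\<in>S. of_nat n * s \<in> OK K" by auto
  obtain m where "m > 0" "of_nat m * x \<in> OK K" using OK_multiple insert.prems by blast
  have "of_nat (m * n) * s \<in> OK K" if "s \<in> insert x S" for s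
  proof (cases "s = x")
    case True
    then show ?thesis using OK_mult[OF OK_of_nat[of n] \<open>of_nat m * x \<in> OK K\<close>] by (simp add: mult_ac)
  next
    case False
    then have "of_nat n * s \<in> OK K" using that n by auto
    then have "of_nat m * (of_nat n * s) \<in> OK K" by (rule OK_mult[OF OK_of_nat])
    then show ?thesis by (simp add: mult_ac)
  qed
  then show ?case using \<open>n > 0\<close> \<open>m > 0\<close> by (intro exI[of _ "m * n"]) simp
qed

section \<open>\<open>\<O>\<close>-lattices\<close>

definition O_lattice :: "complex set \<Rightarrow> bool" where
  "O_lattice \<Lambda> \<longleftrightarrow> (\<exists>S. finite S \<and> \<Lambda> = {\<Sum>s\<in>S. a s * s | a. \<forall>s\<in>S. a s \<in> OK K}) \<and>
     \<Lambda> \<noteq> {0} \<and> (\<exists>w. \<Lambda> \<subseteq> {k * w | k. k \<in> K})"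

lemma is_klattice_O_lattice: "is_klattice K L \<Longrightarrow> O_lattice (fst L)"
  unfolding is_klattice_def O_lattice_def Let_def by blast

lemma is_klattice_map_mult:
  "is_klattice K L \<Longrightarrow> a \<in> OK K \<Longrightarrow> x \<in> K \<Longrightarrow> snd L (a * x) - a * snd L x \<in> fst L"
  unfolding is_klattice_def Let_def by blast

lemma lattice_combinationI:
  "\<forall>s\<in>S. a s \<in> OK K \<Longrightarrow> (\<Sum>s\<in>S. a s * s) \<in> {\<Sum>s\<in>S. a s * s | a. \<forall>s\<in>S. a s \<in> OK K}"
  by blast

context
  fixes \<Lambda> assumes lattice: "O_lattice \<Lambda>"
begin

lemma lattice_generators:
  obtains S where "finite S" "\<Lambda> = {\<Sum>s\<in>S. a s * s | a. \<forall>s\<in>S. a s \<in> OK K}"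
  using lattice unfolding O_lattice_def by blast

lemma lattice_0: "0 \<in> \<Lambda>"
proof -
  obtain S where S: "\<Lambda> = {\<Sum>s\<in>S. a s * s | a. \<forall>s\<in>S. a s \<in> OK K}" by (rule lattice_generators)
  show ?thesis unfolding S using OK_0 by (intro CollectI exI[of _ "\<lambda>_. 0"]) auto
qed

lemma lattice_add: "x \<in> \<Lambda> \<Longrightarrow> y \<in> \<Lambda> \<Longrightarrow> x + y \<in> \<Lambda>"
proof -
  assume "x \<in> \<Lambda>" "y \<in> \<Lambda>"
  obtain S where S: "\<Lambda> = {\<Sum>s\<in>S. a s * s | a. \<forall>s\<in>S. a s \<in> OK K}" by (rule lattice_generators)
  then obtain a b where "x = (\<Sum>s\<in>S. a s * s)" "\<forall>s\<in>S. a s \<in> OK K"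
    "y = (\<Sum>s\<in>S. b s * s)" "\<forall>s\<in>S. b s \<in> OK K"
    using \<open>x \<in> \<Lambda>\<close> \<open>y \<in> \<Lambda>\<close> by blast
  then have "x + y = (\<Sum>s\<in>S. (a s + b s) * s)" "\<forall>s\<in>S. a s + b s \<in> OK K"
    by (simp_all add: sum.distrib distrib_right OK_add)
  then show ?thesis unfolding S using lattice_combinationI[of S "\<lambda>s. a s + b s"] by simp
qed

lemma lattice_mult: "c \<in> OK K \<Longrightarrow> x \<in> \<Lambda> \<Longrightarrow> c * x \<in> \<Lambda>"
proof -
  assume "c \<in> OK K" "x \<in> \<Lambda>"
  obtain S where S: "\<Lambda> = {\<Sum>s\<in>S. a s * s | a. \<forall>s\<in>S. a s \<in> OK K}" by (rule lattice_generators)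
  then obtain a where "x = (\<Sum>s\<in>S. a s * s)" "\<forall>s\<in>S. a s \<in> OK K"
    using \<open>x \<in> \<Lambda>\<close> by blast
  then have "c * x = (\<Sum>s\<in>S. (c * a s) * s)" "\<forall>s\<in>S. c * a s \<in> OK K"
    using \<open>c \<in> OK K\<close> by (simp_all add: sum_distrib_left mult.assoc OK_mult)
  then show ?thesis unfolding S using lattice_combinationI[of S "\<lambda>s. c * a s"] by simp
qed

lemma lattice_uminus: "x \<in> \<Lambda> \<Longrightarrow> - x \<in> \<Lambda>"
  using lattice_mult[OF OK_of_int[of "- 1"]] by simp

lemma lattice_diff: "x \<in> \<Lambda> \<Longrightarrow> y \<in> \<Lambda> \<Longrightarrow> x - y \<in> \<Lambda>"
  using lattice_add[of x "- y"] lattice_uminus[of y] by simp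

lemma lattice_nonzero: "\<exists>l\<in>\<Lambda>. l \<noteq> 0"
  using lattice lattice_0 unfolding O_lattice_def by blast

lemma lattice_line:
  obtains w where "w \<noteq> 0" "\<Lambda> \<subseteq> {k * w | k. k \<in> K}"
proof -
  obtain w where w: "\<Lambda> \<subseteq> {k * w | k. k \<in> K}" using lattice unfolding O_lattice_def by blast
  moreover have "w \<noteq> 0" using lattice_nonzero w by auto
  ultimately show ?thesis using that by blast
qed

lemma lattice_denominator:
  assumes "w \<noteq> 0" "\<Lambda> \<subseteq> {k * w | k. k \<in> K}"
  obtains n :: nat where "n > 0" "\<forall>l\<in>\<Lambda>. \<exists>u\<in>OK K. of_nat n * l = u * w"
proof -
  obtain S where "finite S" and S: "\<Lambda> = {\<Sum>s\<in>S. a s * s | a. \<forall>s\<in>S. a s \<in> OK K}"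
    by (rule lattice_generators)
  have "S \<subseteq> \<Lambda>"
  proof
    fix s assume "s \<in> S"
    have "(\<Sum>t\<in>S. (if t = s then 1 else 0) * t) = (\<Sum>t\<in>S. if t = s then t else 0)"
      by (intro sum.cong) auto
    also have "\<dots> = s" using \<open>finite S\<close> \<open>s \<in> S\<close> by simp
    finally show "s \<in> \<Lambda>"
      unfolding S using lattice_combinationI[of S "\<lambda>t. if t = s then 1 else 0"] OK_0 OK_1 by simp
  qed
  then have "(\<lambda>s. s / w) ` S \<subseteq> K" using assms by auto
  then obtain n :: nat where "n > 0" and n: "\<forall>z\<in>(\<lambda>s. s / w) ` S. of_nat n * z \<in> OK K"
    using OK_common_multiple \<open>finite S\<close> by blast
  then have n: "\<forall>s\<in>S. of_nat n * (s / w) \<in> OK K" by blast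
  have "\<exists>u\<in>OK K. of_nat n * l = u * w" if "l \<in> \<Lambda>" for l
  proof -
    obtain a where l: "l = (\<Sum>s\<in>S. a s * s)" and a: "\<forall>s\<in>S. a s \<in> OK K"
      using \<open>l \<in> \<Lambda>\<close> S by blast
    have "of_nat n * l = (\<Sum>s\<in>S. a s * (of_nat n * (s / w))) * w"
      unfolding l using \<open>w \<noteq> 0\<close> by (simp add: sum_distrib_left sum_distrib_right field_simps)
    moreover have "(\<Sum>s\<in>S. a s * (of_nat n * (s / w))) \<in> OK K"
    proof (rule OK_sum[OF \<open>finite S\<close>])
      fix s assume "s \<in> S"
      show "a s * (of_nat n * (s / w)) \<in> OK K"
        using OK_mult[OF bspec[OF a \<open>s \<in> S\<close>] bspec[OF n \<open>s \<in> S\<close>]] .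
    qed
    ultimately show ?thesis by blast
  qed
  then show ?thesis using that \<open>n > 0\<close> by blast
qed

lemma lattice_discrete: "\<exists>d>0. \<forall>l\<in>\<Lambda>. l \<noteq> 0 \<longrightarrow> d \<le> norm l"
proof -
  obtain w where w: "w \<noteq> 0" "\<Lambda> \<subseteq> {k * w | k. k \<in> K}" by (rule lattice_line)
  then obtain n :: nat where "n > 0" and n: "\<forall>l\<in>\<Lambda>. \<exists>u\<in>OK K. of_nat n * l = u * w"
    by (rule lattice_denominator)
  have "norm w / real n \<le> norm l" if "l \<in> \<Lambda>" "l \<noteq> 0" for l
  proof -
    obtain u where "u \<in> OK K" "of_nat n * l = u * w" using n \<open>l \<in> \<Lambda>\<close> by blast
    moreover from this have "u \<noteq> 0" using \<open>l \<noteq> 0\<close> \<open>n > 0\<close> by auto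
    ultimately have "real n * norm l = norm u * norm w" "1 \<le> norm u"
      using OK_norm_ge_1 by (metis norm_mult norm_of_nat, blast)
    then show ?thesis using \<open>n > 0\<close> by (simp add: divide_le_eq mult_le_cancel_right1 mult.commute)
  qed
  moreover have "norm w / real n > 0" using w \<open>n > 0\<close> by simp
  ultimately show ?thesis by blast
qed

lemma lattice_contains_multiple:
  assumes "\<Lambda> \<subseteq> {k * w | k. k \<in> K}"
  obtains t :: nat where "t > 0" "\<forall>u\<in>OK K. of_nat t * u * w \<in> \<Lambda>"
proof -
  obtain l where "l \<in> \<Lambda>" "l \<noteq> 0" using lattice_nonzero by blast
  then obtain k where "k \<in> K" "l = k * w" "k \<noteq> 0" using assms by auto
  obtain t :: nat where "t > 0" "of_nat t * inverse k \<in> OK K"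
    using OK_multiple[OF K_inverse[OF \<open>k \<in> K\<close>]] .
  have "of_nat t * u * w \<in> \<Lambda>" if "u \<in> OK K" for u
  proof -
    have eq: "of_nat t * u * w = (of_nat t * inverse k * u) * l"
      using \<open>l = k * w\<close> \<open>k \<noteq> 0\<close> by (simp add: field_simps)
    show ?thesis
      unfolding eq by (rule lattice_mult[OF OK_mult[OF \<open>of_nat t * inverse k \<in> OK K\<close> that] \<open>l \<in> \<Lambda>\<close>])
  qed
  then show ?thesis using that \<open>t > 0\<close> by blast
qed

lemma norm_ge_1_if_mult_stable:
  assumes "v \<noteq> 0" "\<forall>l\<in>\<Lambda>. v * l \<in> \<Lambda>"
  shows "1 \<le> norm v"
proof (rule ccontr)
  assume "\<not> 1 \<le> norm v"
  obtain d where "d > 0" and d: "\<forall>l\<in>\<Lambda>. l \<noteq> 0 \<longrightarrow> d \<le> norm l" using lattice_discrete by blast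
  obtain l where "l \<in> \<Lambda>" "l \<noteq> 0" using lattice_nonzero by blast
  have powers: "v ^ j * l \<in> \<Lambda>" for j
    by (induction j) (use \<open>l \<in> \<Lambda>\<close> assms(2) in \<open>auto simp: mult.assoc\<close>)
  obtain j where "norm v ^ j < d / norm l"
    using real_arch_pow_inv[of "d / norm l" "norm v"] \<open>d > 0\<close> \<open>l \<noteq> 0\<close> \<open>\<not> 1 \<le> norm v\<close> by auto
  then have "norm (v ^ j * l) < d"
    using \<open>l \<noteq> 0\<close> by (simp add: norm_mult norm_power less_divide_eq)
  moreover have "v ^ j * l \<noteq> 0" using assms(1) \<open>l \<noteq> 0\<close> by simp
  moreover have "d \<le> norm (v ^ j * l)" using d powers calculation(2) by blast
  ultimately show False by linarith
qed

end

lemma Kspan_eq_common_line: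
  assumes "O_lattice \<Lambda>1" "O_lattice \<Lambda>2" "Kspan K \<Lambda>1 = Kspan K \<Lambda>2"
  obtains w where "w \<noteq> 0" "\<Lambda>1 \<subseteq> {k * w | k. k \<in> K}" "\<Lambda>2 \<subseteq> {k * w | k. k \<in> K}"
proof -
  obtain w where "w \<noteq> 0" and w: "\<Lambda>2 \<subseteq> {k * w | k. k \<in> K}" using lattice_line[OF assms(2)] .
  have "\<Lambda>1 \<subseteq> Kspan K \<Lambda>1" unfolding Kspan_def using K_1 by force
  moreover have "Kspan K \<Lambda>2 \<subseteq> {k * w | k. k \<in> K}"
  proof
    fix z assume "z \<in> Kspan K \<Lambda>2"
    then obtain c x where "c \<in> K" "x \<in> \<Lambda>2" "z = c * x" unfolding Kspan_def by blast
    moreover obtain k where "k \<in> K" "x = k * w" using w \<open>x \<in> \<Lambda>2\<close> by blast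
    ultimately have "z = (c * k) * w" "c * k \<in> K" using K_mult by auto
    then show "z \<in> {k * w | k. k \<in> K}" by blast
  qed
  ultimately show ?thesis using that \<open>w \<noteq> 0\<close> w assms(3) by blast
qed

lemma near_identity_lattice_map_is_scaling:
  assumes "O_lattice \<Lambda>"
  obtains \<epsilon> :: real where "\<epsilon> > 0"
    "\<And>\<alpha>. linear \<alpha> \<Longrightarrow> onorm (\<lambda>z. \<alpha> z - z) < \<epsilon> \<Longrightarrow> O_lattice (\<alpha> ` \<Lambda>) \<Longrightarrow> \<alpha> = (*) (\<alpha> 1)"
proof -
  obtain \<delta> where "\<delta> > 0" and discrete: "\<forall>l\<in>\<Lambda>. l \<noteq> 0 \<longrightarrow> \<delta> \<le> norm l"
    using lattice_discrete[OF assms] by blast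
  obtain l where "l \<in> \<Lambda>" "l \<noteq> 0" using lattice_nonzero[OF assms] by blast
  obtain \<theta> where "\<theta> \<in> OK K" "\<theta> \<notin> \<real>" using OK_nonreal by blast
  define C where "C = 4 * (norm \<theta> + 1) * (norm l + 1)"
  define \<epsilon> where "\<epsilon> = min (1/2) (\<delta> / C)"
  have "norm \<theta> + 1 > 0" "norm l + 1 > 0" by (simp_all add: add_nonneg_pos)
  then have "C > 0" unfolding C_def by simp
  then have "\<epsilon> > 0" unfolding \<epsilon>_def using \<open>\<delta> > 0\<close> by simp
  have small: "4 * \<epsilon> * norm \<theta> * norm l < \<delta>"
  proof -
    have "4 * norm \<theta> * norm l < C" unfolding C_def by (simp add: algebra_simps add_pos_nonneg)
    then have "\<epsilon> * (4 * norm \<theta> * norm l) < \<epsilon> * C" using \<open>\<epsilon> > 0\<close> by simp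
    also have "\<epsilon> * C \<le> \<delta>" unfolding \<epsilon>_def using \<open>C > 0\<close> by (simp add: min_def field_simps)
    finally show ?thesis by (simp add: mult_ac)
  qed
  have "\<alpha> = (*) (\<alpha> 1)"
    if "linear \<alpha>" "onorm (\<lambda>z. \<alpha> z - z) < \<epsilon>" "O_lattice (\<alpha> ` \<Lambda>)" for \<alpha>
  proof
    have "\<theta> * \<alpha> l \<in> \<alpha> ` \<Lambda>"
      using lattice_mult[OF that(3) \<open>\<theta> \<in> OK K\<close>] \<open>l \<in> \<Lambda>\<close> by blast
    moreover have "\<epsilon> \<le> 1/2" unfolding \<epsilon>_def by (rule min.cobounded1)
    ultimately have "\<alpha> (\<theta> * l) = \<theta> * \<alpha> l"
      using near_identity_commutes[OF that(1,2) _ discrete _ _ _ small]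
        lattice_mult[OF assms \<open>\<theta> \<in> OK K\<close> \<open>l \<in> \<Lambda>\<close>] lattice_diff[OF assms]
      by blast
    then show "\<alpha> z = \<alpha> 1 * z" for z
      by (rule linear_mult_if_commutes_nonreal[OF that(1) \<open>\<theta> \<notin> \<real>\<close> \<open>l \<noteq> 0\<close>])
  qed
  then show ?thesis using that \<open>\<epsilon> > 0\<close> by blast
qed

section \<open>Similarity factors between lattices in one line\<close>

lemma similarity_factor_nonzero: "O_lattice \<Lambda>1 \<Longrightarrow> \<Lambda>1 = (*) h ` \<Lambda>2 \<Longrightarrow> h \<noteq> 0"
  using lattice_nonzero by fastforce

lemma norm_similarity_factor_le:
  assumes "O_lattice \<Lambda>1" "O_lattice \<Lambda>2" "\<Lambda>1 = (*) h ` \<Lambda>2" "\<Lambda>1 = (*) h' ` \<Lambda>2"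
  shows "norm h \<le> norm h'"
proof -
  have "h \<noteq> 0" "h' \<noteq> 0" using similarity_factor_nonzero assms by blast+
  have "h' / h * l \<in> \<Lambda>2" if "l \<in> \<Lambda>2" for l
  proof -
    obtain l' where "l' \<in> \<Lambda>2" "h' * l = h * l'" using assms(3,4) \<open>l \<in> \<Lambda>2\<close> by blast
    then show ?thesis using \<open>h \<noteq> 0\<close> by (simp add: field_simps)
  qed
  then have "1 \<le> norm (h' / h)"
    using norm_ge_1_if_mult_stable[OF assms(2)] \<open>h \<noteq> 0\<close> \<open>h' \<noteq> 0\<close> by simp
  then show ?thesis using \<open>h \<noteq> 0\<close> by (simp add: norm_divide le_divide_eq)
qed

lemma similarity_factor_denominator:
  assumes "O_lattice \<Lambda>1" "O_lattice \<Lambda>2" "w \<noteq> 0"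
    "\<Lambda>1 \<subseteq> {k * w | k. k \<in> K}" "\<Lambda>2 \<subseteq> {k * w | k. k \<in> K}"
  shows "\<exists>E::nat. E > 0 \<and> (\<forall>h. \<Lambda>1 = (*) h ` \<Lambda>2 \<longrightarrow> of_nat E * h \<in> OK K)"
proof -
  obtain n :: nat where "n > 0" and n: "\<forall>l\<in>\<Lambda>1. \<exists>u\<in>OK K. of_nat n * l = u * w"
    using lattice_denominator[OF assms(1,3,4)] .
  obtain t :: nat where "t > 0" and t: "\<forall>u\<in>OK K. of_nat t * u * w \<in> \<Lambda>2"
    using lattice_contains_multiple[OF assms(2,5)] .
  have E: "of_nat (n * t) * h \<in> OK K" if "\<Lambda>1 = (*) h ` \<Lambda>2" for h
  proof -
    have "h * (of_nat t * 1 * w) \<in> \<Lambda>1" using that t OK_1 by blast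
    then obtain u where "u \<in> OK K" "of_nat n * (h * (of_nat t * 1 * w)) = u * w" using n by blast
    then have "of_nat (n * t) * h * w = u * w" by (simp add: mult_ac)
    then show ?thesis using \<open>u \<in> OK K\<close> \<open>w \<noteq> 0\<close> by simp
  qed
  then show ?thesis using \<open>n > 0\<close> \<open>t > 0\<close> by (intro exI[of _ "n * t"]) simp
qed

lemma similarity_factor_minus_1_denominator:
  assumes "O_lattice \<Lambda>1" "O_lattice \<Lambda>2" "w \<noteq> 0"
    "\<Lambda>1 \<subseteq> {k * w | k. k \<in> K}" "\<Lambda>2 \<subseteq> {k * w | k. k \<in> K}"
  obtains P :: nat where "P > 0" "\<And>h. \<Lambda>1 = (*) h ` \<Lambda>2 \<Longrightarrow> h \<noteq> 1 \<Longrightarrow> of_nat P / (h - 1) \<in> OK K"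
proof (cases "\<exists>h0. \<Lambda>1 = (*) h0 ` \<Lambda>2")
  case False
  show ?thesis by (rule that[of 1]) (use False in auto)
next
  case True
  then obtain h0 where h0: "\<Lambda>1 = (*) h0 ` \<Lambda>2" by blast
  obtain E :: nat where "E > 0" and E: "\<And>h. \<Lambda>1 = (*) h ` \<Lambda>2 \<Longrightarrow> of_nat E * h \<in> OK K"
    using similarity_factor_denominator[OF assms] by blast
  \<comment> \<open>\<open>B\<close> bounds the norms of all the integers \<open>E * (h - 1)\<close>, since \<open>norm h \<le> norm h0\<close>\<close>
  define B where "B = nat \<lceil>(real E * (norm h0 + 1))\<^sup>2\<rceil>"
  have "of_nat (E * fact B) / (h - 1) \<in> OK K" if h: "\<Lambda>1 = (*) h ` \<Lambda>2" "h \<noteq> 1" for h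
  proof -
    define g where "g = of_nat E * (h - 1)"
    have "g \<in> OK K" using OK_diff[OF E[OF h(1)] OK_of_nat[of E]] by (simp add: g_def algebra_simps)
    have "g \<noteq> 0" using \<open>E > 0\<close> h(2) by (simp add: g_def)
    have "norm g \<le> real E * (norm h + 1)"
      unfolding g_def norm_mult norm_of_nat using norm_triangle_ineq4[of h 1] by (intro mult_left_mono) auto
    also have "\<dots> \<le> real E * (norm h0 + 1)"
      using norm_similarity_factor_le[OF assms(1,2) h(1) h0] by (simp add: mult_left_mono)
    finally have "(norm g)\<^sup>2 \<le> real B"
      unfolding B_def by (smt (verit) norm_ge_zero power_mono real_nat_ceiling_ge)
    then have "of_nat E * of_nat E * (of_nat (fact B) / g) \<in> OK K"
      using fact_divide_OK \<open>g \<in> OK K\<close> \<open>g \<noteq> 0\<close> OK_mult OK_of_nat by metis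
    moreover have "of_nat E * of_nat E * (of_nat (fact B) / g) = of_nat (E * fact B) / (h - 1)"
      using \<open>E > 0\<close> by (simp add: g_def)
    ultimately show ?thesis by simp
  qed
  then show ?thesis using that[of "E * fact B"] \<open>E > 0\<close> by simp
qed

lemma similar_lattices_uniform_denominator:
  assumes "O_lattice \<Lambda>1" "O_lattice \<Lambda>2" "w \<noteq> 0"
    "\<Lambda>1 \<subseteq> {k * w | k. k \<in> K}" "\<Lambda>2 \<subseteq> {k * w | k. k \<in> K}"
  obtains m :: nat where "m > 0"
    "\<And>h a b. \<Lambda>1 = (*) h ` \<Lambda>2 \<Longrightarrow> h \<noteq> 1 \<Longrightarrow> a \<in> \<Lambda>1 \<Longrightarrow> b \<in> \<Lambda>2 \<Longrightarrow>
       of_nat m * (a + b) / (h - 1) \<in> \<Lambda>2"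
proof -
  obtain n1 :: nat where "n1 > 0" and n1: "\<forall>l\<in>\<Lambda>1. \<exists>u\<in>OK K. of_nat n1 * l = u * w"
    using lattice_denominator[OF assms(1,3,4)] .
  obtain n2 :: nat where "n2 > 0" and n2: "\<forall>l\<in>\<Lambda>2. \<exists>u\<in>OK K. of_nat n2 * l = u * w"
    using lattice_denominator[OF assms(2,3,5)] .
  obtain t :: nat where "t > 0" and t: "\<forall>u\<in>OK K. of_nat t * u * w \<in> \<Lambda>2"
    using lattice_contains_multiple[OF assms(2,5)] .
  obtain P :: nat where "P > 0"
    and P: "\<And>h. \<Lambda>1 = (*) h ` \<Lambda>2 \<Longrightarrow> h \<noteq> 1 \<Longrightarrow> of_nat P / (h - 1) \<in> OK K"
    using similarity_factor_minus_1_denominator[OF assms] by blast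
  define m where "m = n1 * n2 * t * P"
  have m: "of_nat m * (a + b) / (h - 1) \<in> \<Lambda>2"
    if "\<Lambda>1 = (*) h ` \<Lambda>2" "h \<noteq> 1" "a \<in> \<Lambda>1" "b \<in> \<Lambda>2" for h a b
  proof -
    obtain u1 u2 where "u1 \<in> OK K" "of_nat n1 * a = u1 * w" "u2 \<in> OK K" "of_nat n2 * b = u2 * w"
      using n1 n2 \<open>a \<in> \<Lambda>1\<close> \<open>b \<in> \<Lambda>2\<close> by blast
    then have sum: "of_nat n1 * of_nat n2 * (a + b) = (of_nat n2 * u1 + of_nat n1 * u2) * w"
      by (simp add: algebra_simps)
    have "of_nat m * (a + b) / (h - 1) = of_nat t * (of_nat P / (h - 1)) * (of_nat n1 * of_nat n2 * (a + b))"
      unfolding m_def of_nat_mult by (simp add: mult_ac)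
    also have "\<dots> = of_nat t * (of_nat P / (h - 1) * (of_nat n2 * u1 + of_nat n1 * u2)) * w"
      unfolding sum by (simp add: mult_ac)
    finally have "of_nat m * (a + b) / (h - 1)
        = of_nat t * (of_nat P / (h - 1) * (of_nat n2 * u1 + of_nat n1 * u2)) * w" .
    moreover have "of_nat P / (h - 1) * (of_nat n2 * u1 + of_nat n1 * u2) \<in> OK K"
      by (intro OK_mult OK_add OK_of_nat P[OF that(1,2)] \<open>u1 \<in> OK K\<close> \<open>u2 \<in> OK K\<close>)
    ultimately show ?thesis using t by metis
  qed
  have "m > 0" using \<open>n1 > 0\<close> \<open>n2 > 0\<close> \<open>t > 0\<close> \<open>P > 0\<close> by (simp add: m_def)
  then show ?thesis using that m by blast
qed

lemma commens_same_lattice_imp_klat_eq: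
  assumes "O_lattice (fst L1)" "commens K L1 L2" "fst L1 = fst L2"
  shows "klat_eq K L1 L2"
  unfolding klat_eq_def
proof (intro conjI ballI)
  fix x assume "x \<in> K"
  then obtain a b where "a \<in> fst L1" "b \<in> fst L1" "snd L1 x - snd L2 x = a + b"
    using assms(2,3) unfolding commens_def by auto
  then show "snd L1 x - snd L2 x \<in> fst L1" using lattice_add[OF assms(1)] by simp
qed fact

section \<open>Agreement at finite level\<close>

definition level_match :: "nat \<Rightarrow> complex \<Rightarrow> klat \<Rightarrow> klat \<Rightarrow> bool" where
  "level_match N c L M \<longleftrightarrow> fst M = (*) c ` fst L \<and>
     (\<forall>x\<in>K. of_nat N * x \<in> OK K \<longrightarrow> snd M x - c * snd L x \<in> fst M)"

lemma level_match_refl: "O_lattice (fst L) \<Longrightarrow> level_match N 1 L L"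
  unfolding level_match_def using lattice_0 by simp

lemma klat_eq_scale_imp_level_match: "klat_eq K M (scale c L) \<Longrightarrow> level_match N c L M"
  unfolding klat_eq_def scale_def level_match_def by auto

lemma level_match_trans:
  assumes "O_lattice (fst M')" "level_match N c L M" "level_match N e M M'"
  shows "level_match N (e * c) L M'"
  unfolding level_match_def
proof (intro conjI ballI impI)
  show "fst M' = (*) (e * c) ` fst L"
    using assms(2,3) unfolding level_match_def by (simp add: image_image mult.assoc)
  fix x assume "x \<in> K" "of_nat N * x \<in> OK K"
  then have "snd M' x - e * snd M x \<in> fst M'" "e * (snd M x - c * snd L x) \<in> fst M'"
    using assms(2,3) unfolding level_match_def by auto
  from lattice_add[OF assms(1) this] show "snd M' x - e * c * snd L x \<in> fst M'"
    by (simp add: algebra_simps)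
qed

lemma level_match_inverse:
  assumes "O_lattice (fst M)" "c \<noteq> 0" "level_match N c L M"
  shows "level_match N (inverse c) M L"
  unfolding level_match_def
proof (intro conjI ballI impI)
  have "(*) (inverse c) ` fst M = (\<lambda>l. inverse c * (c * l)) ` fst L"
    using assms(3) unfolding level_match_def by (simp add: image_image)
  also have "(\<lambda>l. inverse c * (c * l)) = id" using assms(2) by (simp add: fun_eq_iff)
  finally show "fst L = (*) (inverse c) ` fst M" by simp
  fix x assume "x \<in> K" "of_nat N * x \<in> OK K"
  then have "- (snd M x - c * snd L x) \<in> fst M"
    using assms(3) lattice_uminus[OF assms(1)] unfolding level_match_def by blast
  then obtain l where "l \<in> fst L" "- (snd M x - c * snd L x) = c * l"
    using assms(3) unfolding level_match_def by auto
  moreover have "snd L x - inverse c * snd M x = inverse c * (- (snd M x - c * snd L x))"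
    using assms(2) by (simp add: field_simps)
  ultimately show "snd L x - inverse c * snd M x \<in> fst L"
    using assms(2) by (simp add: mult.assoc[symmetric])
qed

lemma level_separation:
  assumes L1: "is_klattice K L1" and L2: "is_klattice K L2" and "commens K L1 L2"
    and "\<not> klat_eq K L1 L2" and "x \<in> K" "snd L2 x \<notin> fst L2"
  shows "\<exists>N>0. \<forall>h. \<not> level_match N h L2 L1"
proof -
  have lat1: "O_lattice (fst L1)" and lat2: "O_lattice (fst L2)"
    using L1 L2 by (simp_all add: is_klattice_O_lattice)
  obtain w where "w \<noteq> 0" "fst L1 \<subseteq> {k * w | k. k \<in> K}" "fst L2 \<subseteq> {k * w | k. k \<in> K}"
    using Kspan_eq_common_line[OF lat1 lat2] \<open>commens K L1 L2\<close> unfolding commens_def by blast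
  then obtain m :: nat where "m > 0" and m: "\<And>h a b. fst L1 = (*) h ` fst L2 \<Longrightarrow> h \<noteq> 1 \<Longrightarrow>
      a \<in> fst L1 \<Longrightarrow> b \<in> fst L2 \<Longrightarrow> of_nat m * (a + b) / (h - 1) \<in> fst L2"
    using similar_lattices_uniform_denominator[OF lat1 lat2] by blast
  obtain D :: nat where "D > 0" "of_nat D * x \<in> OK K" using OK_multiple[OF \<open>x \<in> K\<close>] .
  \<comment> \<open>a match at level \<open>D * m\<close> forces \<open>\<phi>\<^sub>2 (x / m)\<close>, hence \<open>\<phi>\<^sub>2 x\<close>, into \<open>\<Lambda>\<^sub>2\<close>\<close>
  have "\<not> level_match (D * m) h L2 L1" for h
  proof
    assume "level_match (D * m) h L2 L1"
    then have h: "fst L1 = (*) h ` fst L2"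
      and agree: "\<And>y. y \<in> K \<Longrightarrow> of_nat (D * m) * y \<in> OK K \<Longrightarrow> snd L1 y - h * snd L2 y \<in> fst L1"
      unfolding level_match_def by auto
    have "h \<noteq> 1"
      using h commens_same_lattice_imp_klat_eq[OF lat1 \<open>commens K L1 L2\<close>] \<open>\<not> klat_eq K L1 L2\<close> by auto
    define y where "y = x / of_nat m"
    have "y \<in> K" unfolding y_def using K_divide[OF \<open>x \<in> K\<close> K_of_nat] .
    have "of_nat m * y = x" unfolding y_def using \<open>m > 0\<close> by simp
    then have "of_nat (D * m) * y \<in> OK K" using \<open>of_nat D * x \<in> OK K\<close> by (simp add: mult.assoc)
    then have a': "snd L1 y - h * snd L2 y \<in> fst L1" using agree \<open>y \<in> K\<close> by blast
    obtain a b where "a \<in> fst L1" "b \<in> fst L2" "snd L1 y - snd L2 y = a + b"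
      using \<open>commens K L1 L2\<close> \<open>y \<in> K\<close> unfolding commens_def by blast
    then have "snd L2 y = ((a - (snd L1 y - h * snd L2 y)) + b) / (h - 1)"
      using \<open>h \<noteq> 1\<close> by (simp add: field_simps)
    then have "of_nat m * snd L2 y \<in> fst L2"
      using m[OF h \<open>h \<noteq> 1\<close> lattice_diff[OF lat1 \<open>a \<in> fst L1\<close> a'] \<open>b \<in> fst L2\<close>]
      by (metis times_divide_eq_right)
    moreover have "snd L2 (of_nat m * y) - of_nat m * snd L2 y \<in> fst L2"
      using is_klattice_map_mult[OF L2 OK_of_nat \<open>y \<in> K\<close>] .
    ultimately have "snd L2 (of_nat m * y) \<in> fst L2" using lattice_add[OF lat2] by fastforce
    then show False using \<open>snd L2 x \<notin> fst L2\<close> \<open>of_nat m * y = x\<close> by simp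
  qed
  then show ?thesis using \<open>D > 0\<close> \<open>m > 0\<close> by (intro exI[of _ "D * m"]) simp
qed

section \<open>The separating neighbourhood\<close>

lemma RtD: "\<gamma> \<in> Rt K \<Longrightarrow> is_klattice K (fst \<gamma>) \<and> is_klattice K (snd \<gamma>) \<and> commens K (fst \<gamma>) (snd \<gamma>)"
  unfolding Rt_def by auto

lemma Rt_O_lattices: "\<gamma> \<in> Rt K \<Longrightarrow> O_lattice (fst (fst \<gamma>)) \<and> O_lattice (fst (snd \<gamma>))"
  using RtD is_klattice_O_lattice by blast

lemma klat_eq_refl: "O_lattice (fst L) \<Longrightarrow> klat_eq K L L"
  unfolding klat_eq_def using lattice_0 by simp

lemma gk_rel_refl: "\<gamma> \<in> Rt K \<Longrightarrow> (\<gamma>, \<gamma>) \<in> gk_rel K"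
  unfolding gk_rel_def using Rt_O_lattices klat_eq_refl by (fastforce intro!: exI[of _ 1])

lemma klat_eq_imp_unit:
  assumes "\<gamma> \<in> Rt K" "klat_eq K (fst \<gamma>) (snd \<gamma>)"
  shows "gk_rel K `` {\<gamma>} \<in> units_GK K"
proof -
  have "O_lattice (fst (fst \<gamma>))" using Rt_O_lattices[OF assms(1)] by blast
  then have "commens K (fst \<gamma>) (fst \<gamma>)"
    unfolding commens_def using lattice_0 by force
  then have "(fst \<gamma>, fst \<gamma>) \<in> Rt K" using assms(1) unfolding Rt_def by auto
  then have "(\<gamma>, (fst \<gamma>, fst \<gamma>)) \<in> gk_rel K"
    using assms klat_eq_refl[OF \<open>O_lattice (fst (fst \<gamma>))\<close>] unfolding gk_rel_def
    by (auto intro!: exI[of _ 1])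
  moreover have "gk_rel K `` {\<gamma>} \<in> GK K" unfolding GK_def using assms(1) by (rule quotientI)
  ultimately show ?thesis unfolding units_GK_def by blast
qed

lemma source_outside_F:
  assumes "\<gamma> \<in> \<Gamma>" "sr \<Gamma> \<in> Xset K - Fset K"
  shows "\<exists>x\<in>K. snd (snd \<gamma>) x \<notin> fst (snd \<gamma>)"
proof (rule ccontr)
  assume "\<not> (\<exists>x\<in>K. snd (snd \<gamma>) x \<notin> fst (snd \<gamma>))"
  then have zero: "\<forall>x\<in>K. snd (snd \<gamma>) x \<in> fst (snd \<gamma>)" by blast
  obtain L where "is_klattice K L" and L: "sr \<Gamma> = xclass K L" using assms(2) unfolding Xset_def by blast
  moreover have "snd \<gamma> \<in> sr \<Gamma>" unfolding sr_def using assms(1) by blast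
  ultimately obtain c where "c \<noteq> 0" "is_klattice K (snd \<gamma>)" "klat_eq K (snd \<gamma>) (scale c L)"
    unfolding xclass_def by blast
  then have match: "level_match 0 c L (snd \<gamma>)" using klat_eq_scale_imp_level_match by blast
  have "\<forall>x\<in>K. snd L x \<in> fst L"
  proof
    fix x assume "x \<in> K"
    have "snd (snd \<gamma>) x - c * snd L x \<in> fst (snd \<gamma>)"
      using match OK_0 \<open>x \<in> K\<close> unfolding level_match_def by auto
    then have "snd (snd \<gamma>) x - (snd (snd \<gamma>) x - c * snd L x) \<in> fst (snd \<gamma>)"
      using zero \<open>x \<in> K\<close> lattice_diff[OF is_klattice_O_lattice[OF \<open>is_klattice K (snd \<gamma>)\<close>]] by blast
    then have "c * snd L x \<in> (*) c ` fst L" using match unfolding level_match_def by simp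
    then show "snd L x \<in> fst L" using \<open>c \<noteq> 0\<close> by auto
  qed
  then have "sr \<Gamma> \<in> Fset K" unfolding Fset_def L using \<open>is_klattice K L\<close> by blast
  then show False using assms(2) by blast
qed

definition similar_pairs :: "nat \<Rightarrow> klat \<Rightarrow> klat \<Rightarrow> (klat \<times> klat) set" where
  "similar_pairs N L1 L2 = {\<gamma> \<in> Rt K. \<exists>c. c \<noteq> 0 \<and>
     level_match N c L1 (fst \<gamma>) \<and> level_match N c L2 (snd \<gamma>)}"

lemma similar_pairs_self:
  assumes "\<gamma> \<in> Rt K"
  shows "\<gamma> \<in> similar_pairs N (fst \<gamma>) (snd \<gamma>)"
proof -
  have "level_match N 1 (fst \<gamma>) (fst \<gamma>)" "level_match N 1 (snd \<gamma>) (snd \<gamma>)"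
    using Rt_O_lattices[OF assms] level_match_refl by blast+
  then show ?thesis unfolding similar_pairs_def using assms by (intro CollectI conjI exI[of _ 1]) simp_all
qed

lemma similar_pairs_saturated:
  assumes "\<gamma> \<in> similar_pairs N L1 L2" "(\<gamma>, \<gamma>') \<in> gk_rel K"
  shows "\<gamma>' \<in> similar_pairs N L1 L2"
proof -
  obtain c where "c \<noteq> 0" "level_match N c L1 (fst \<gamma>)" "level_match N c L2 (snd \<gamma>)"
    using assms(1) unfolding similar_pairs_def by blast
  moreover obtain e where "\<gamma>' \<in> Rt K" "e \<noteq> 0"
    "level_match N e (fst \<gamma>) (fst \<gamma>')" "level_match N e (snd \<gamma>) (snd \<gamma>')"
    using assms(2) klat_eq_scale_imp_level_match unfolding gk_rel_def by blast
  ultimately have "e * c \<noteq> 0" "level_match N (e * c) L1 (fst \<gamma>')" "level_match N (e * c) L2 (snd \<gamma>')"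
    using level_match_trans Rt_O_lattices[OF \<open>\<gamma>' \<in> Rt K\<close>] by auto
  then show ?thesis unfolding similar_pairs_def using \<open>\<gamma>' \<in> Rt K\<close> by blast
qed

lemma nbhd_level_match:
  assumes "\<gamma> \<in> Rt K"
  obtains \<epsilon> :: real where "\<epsilon> > 0"
    "\<And>\<gamma>'. \<gamma>' \<in> nbhd K \<gamma> \<epsilon> N \<Longrightarrow>
       \<exists>e. e \<noteq> 0 \<and> level_match N e (fst \<gamma>) (fst \<gamma>') \<and> level_match N e (snd \<gamma>) (snd \<gamma>')"
proof -
  obtain \<epsilon> :: real where "\<epsilon> > 0" and scaling: "\<And>\<alpha>. linear \<alpha> \<Longrightarrow> onorm (\<lambda>z. \<alpha> z - z) < \<epsilon> \<Longrightarrow>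
      O_lattice (\<alpha> ` fst (fst \<gamma>)) \<Longrightarrow> \<alpha> = (*) (\<alpha> 1)"
    using near_identity_lattice_map_is_scaling Rt_O_lattices[OF assms] by blast
  have "\<exists>e. e \<noteq> 0 \<and> level_match N e (fst \<gamma>) (fst \<gamma>') \<and> level_match N e (snd \<gamma>) (snd \<gamma>')"
    if \<gamma>': "\<gamma>' \<in> nbhd K \<gamma> \<epsilon> N" for \<gamma>'
  proof -
    obtain \<alpha> where "\<gamma>' \<in> Rt K" "linear \<alpha>" "onorm (\<lambda>z. \<alpha> z - z) < \<epsilon>"
      and lattices: "fst (fst \<gamma>') = \<alpha> ` fst (fst \<gamma>)" "fst (snd \<gamma>') = \<alpha> ` fst (snd \<gamma>)"
      and torsion: "\<forall>x\<in>K. of_nat N * x \<in> OK K \<longrightarrow>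
          snd (fst \<gamma>') x - \<alpha> (snd (fst \<gamma>) x) \<in> fst (fst \<gamma>') \<and>
          snd (snd \<gamma>') x - \<alpha> (snd (snd \<gamma>) x) \<in> fst (snd \<gamma>')"
      using \<gamma>' unfolding nbhd_def by blast
    have "O_lattice (\<alpha> ` fst (fst \<gamma>))" using Rt_O_lattices[OF \<open>\<gamma>' \<in> Rt K\<close>] lattices by simp
    moreover define e where "e = \<alpha> 1"
    ultimately have \<alpha>: "\<alpha> = (*) e"
      using scaling \<open>linear \<alpha>\<close> \<open>onorm (\<lambda>z. \<alpha> z - z) < \<epsilon>\<close> by blast
    have "e \<noteq> 0"
      using similarity_factor_nonzero[OF \<open>O_lattice (\<alpha> ` fst (fst \<gamma>))\<close>] \<alpha> by blast
    moreover have "level_match N e (fst \<gamma>) (fst \<gamma>')" "level_match N e (snd \<gamma>) (snd \<gamma>')"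
      using lattices torsion unfolding level_match_def \<alpha> by auto
    ultimately show ?thesis by blast
  qed
  then show ?thesis using that \<open>\<epsilon> > 0\<close> by blast
qed

lemma similar_pairs_open:
  assumes "N > 0"
  shows "rt_open K (similar_pairs N L1 L2)"
  unfolding rt_open_def
proof (intro conjI ballI)
  show "similar_pairs N L1 L2 \<subseteq> Rt K" unfolding similar_pairs_def by blast
  fix \<gamma> assume "\<gamma> \<in> similar_pairs N L1 L2"
  then obtain c where "\<gamma> \<in> Rt K" "c \<noteq> 0" "level_match N c L1 (fst \<gamma>)" "level_match N c L2 (snd \<gamma>)"
    unfolding similar_pairs_def by blast
  obtain \<epsilon> :: real where "\<epsilon> > 0" and near: "\<And>\<gamma>'. \<gamma>' \<in> nbhd K \<gamma> \<epsilon> N \<Longrightarrow>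
      \<exists>e. e \<noteq> 0 \<and> level_match N e (fst \<gamma>) (fst \<gamma>') \<and> level_match N e (snd \<gamma>) (snd \<gamma>')"
    using nbhd_level_match[OF \<open>\<gamma> \<in> Rt K\<close>] by blast
  have "nbhd K \<gamma> \<epsilon> N \<subseteq> similar_pairs N L1 L2"
  proof
    fix \<gamma>' assume "\<gamma>' \<in> nbhd K \<gamma> \<epsilon> N"
    moreover from this have "\<gamma>' \<in> Rt K" unfolding nbhd_def by blast
    ultimately obtain e where "e \<noteq> 0"
      "level_match N e (fst \<gamma>) (fst \<gamma>')" "level_match N e (snd \<gamma>) (snd \<gamma>')"
      using near by blast
    then have "e * c \<noteq> 0" "level_match N (e * c) L1 (fst \<gamma>')" "level_match N (e * c) L2 (snd \<gamma>')"
      using level_match_trans Rt_O_lattices[OF \<open>\<gamma>' \<in> Rt K\<close>] \<open>c \<noteq> 0\<close>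
        \<open>level_match N c L1 (fst \<gamma>)\<close> \<open>level_match N c L2 (snd \<gamma>)\<close> by auto
    then show "\<gamma>' \<in> similar_pairs N L1 L2" unfolding similar_pairs_def using \<open>\<gamma>' \<in> Rt K\<close> by blast
  qed
  then show "\<exists>\<epsilon>>0. \<exists>M>0. nbhd K \<gamma> \<epsilon> M \<subseteq> similar_pairs N L1 L2"
    using \<open>\<epsilon> > 0\<close> \<open>N > 0\<close> by blast
qed

lemma gk_open_saturated:
  assumes "rt_open K W" and saturated: "\<And>\<gamma> \<gamma>'. \<gamma> \<in> W \<Longrightarrow> (\<gamma>, \<gamma>') \<in> gk_rel K \<Longrightarrow> \<gamma>' \<in> W"
  shows "gk_open K {\<Gamma> \<in> GK K. \<Gamma> \<subseteq> W}"
proof -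
  have "W \<subseteq> \<Union>{\<Gamma> \<in> GK K. \<Gamma> \<subseteq> W}"
  proof
    fix \<gamma> assume "\<gamma> \<in> W"
    then have "\<gamma> \<in> Rt K" using assms(1) unfolding rt_open_def by blast
    then have "gk_rel K `` {\<gamma>} \<in> GK K" "\<gamma> \<in> gk_rel K `` {\<gamma>}"
      unfolding GK_def by (auto intro: quotientI gk_rel_refl)
    moreover have "gk_rel K `` {\<gamma>} \<subseteq> W" using saturated \<open>\<gamma> \<in> W\<close> by blast
    ultimately show "\<gamma> \<in> \<Union>{\<Gamma> \<in> GK K. \<Gamma> \<subseteq> W}" by blast
  qed
  then have "\<Union>{\<Gamma> \<in> GK K. \<Gamma> \<subseteq> W} = W" by blast
  then show ?thesis using assms(1) unfolding gk_open_def by simp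
qed

lemma similar_pairs_range_source_disjoint:
  assumes "O_lattice (fst L1)" "\<forall>h. \<not> level_match N h L2 L1"
  defines "V \<equiv> {\<Gamma> \<in> GK K. \<Gamma> \<subseteq> similar_pairs N L1 L2}"
  shows "rg ` V \<inter> sr ` V = {}"
proof (rule ccontr)
  assume "rg ` V \<inter> sr ` V \<noteq> {}"
  then obtain \<Gamma>a \<Gamma>b where "\<Gamma>a \<in> V" "\<Gamma>b \<in> V" "rg \<Gamma>a = sr \<Gamma>b" by auto
  then obtain \<gamma>a where "\<gamma>a \<in> Rt K" "\<Gamma>a = gk_rel K `` {\<gamma>a}"
    unfolding V_def GK_def quotient_def by blast
  then have "\<gamma>a \<in> \<Gamma>a" using gk_rel_refl by blast
  then have "fst \<gamma>a \<in> sr \<Gamma>b" using \<open>rg \<Gamma>a = sr \<Gamma>b\<close> unfolding rg_def by force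
  then obtain \<gamma>b where "\<gamma>b \<in> \<Gamma>b" "snd \<gamma>b = fst \<gamma>a" unfolding sr_def by auto
  obtain c where "c \<noteq> 0" "level_match N c L1 (fst \<gamma>a)"
    using \<open>\<gamma>a \<in> \<Gamma>a\<close> \<open>\<Gamma>a \<in> V\<close> unfolding V_def similar_pairs_def by blast
  moreover obtain d where "level_match N d L2 (fst \<gamma>a)"
    using \<open>\<gamma>b \<in> \<Gamma>b\<close> \<open>\<Gamma>b \<in> V\<close> \<open>snd \<gamma>b = fst \<gamma>a\<close> unfolding V_def similar_pairs_def by force
  moreover have "O_lattice (fst (fst \<gamma>a))" using Rt_O_lattices[OF \<open>\<gamma>a \<in> Rt K\<close>] by blast
  ultimately have "level_match N (inverse c * d) L2 L1"
    using level_match_trans[OF assms(1)] level_match_inverse by blast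
  then show False using assms(2) by blast
qed

end

theorem mainTheorem15:
  fixes K :: "complex set"
  assumes "imag_quadratic_field K"
  shows "\<forall>\<Gamma> \<in> G1 K - units_GK K. \<exists>V. gk_open K V \<and> \<Gamma> \<in> V \<and> rg ` V \<inter> sr ` V = {}"
proof
  interpret imag_quadratic K by (rule imag_quadratic.intro) fact
  fix \<Gamma> assume \<Gamma>: "\<Gamma> \<in> G1 K - units_GK K"
  then have "\<Gamma> \<in> GK K" unfolding G1_def by blast
  then obtain \<gamma> where "\<gamma> \<in> Rt K" and \<Gamma>_eq: "\<Gamma> = gk_rel K `` {\<gamma>}"
    unfolding GK_def quotient_def by blast
  then have "\<gamma> \<in> \<Gamma>" using gk_rel_refl by blast
  have L: "is_klattice K (fst \<gamma>)" "is_klattice K (snd \<gamma>)" "commens K (fst \<gamma>) (snd \<gamma>)"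
    using RtD[OF \<open>\<gamma> \<in> Rt K\<close>] by auto
  have "\<not> klat_eq K (fst \<gamma>) (snd \<gamma>)"
    using klat_eq_imp_unit[OF \<open>\<gamma> \<in> Rt K\<close>] \<Gamma> \<Gamma>_eq by blast
  moreover obtain x where "x \<in> K" "snd (snd \<gamma>) x \<notin> fst (snd \<gamma>)"
    using source_outside_F[OF \<open>\<gamma> \<in> \<Gamma>\<close>] \<Gamma> unfolding G1_def by blast
  ultimately obtain N where "N > 0" and N: "\<forall>h. \<not> level_match N h (snd \<gamma>) (fst \<gamma>)"
    using level_separation[OF L] by blast
  define W where "W = similar_pairs N (fst \<gamma>) (snd \<gamma>)"
  define V where "V = {\<Gamma>' \<in> GK K. \<Gamma>' \<subseteq> W}"
  have "gk_open K V"
    unfolding V_def W_def using similar_pairs_open[OF \<open>N > 0\<close>] similar_pairs_saturated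
    by (rule gk_open_saturated)
  moreover have "\<Gamma> \<in> V"
    using \<open>\<Gamma> \<in> GK K\<close> \<Gamma>_eq similar_pairs_self[OF \<open>\<gamma> \<in> Rt K\<close>] similar_pairs_saturated
    unfolding V_def W_def by blast
  moreover have "rg ` V \<inter> sr ` V = {}"
    unfolding V_def W_def
    using similar_pairs_range_source_disjoint[OF conjunct1[OF Rt_O_lattices[OF \<open>\<gamma> \<in> Rt K\<close>]] N] .
  ultimately show "\<exists>V. gk_open K V \<and> \<Gamma> \<in> V \<and> rg ` V \<inter> sr ` V = {}" by blast
qed

end
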